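(* Let $q_1,q_2,q_3,q_4$ satisfy $q_1q_2q_3q_4=1$, let $x$ be a further variable, and let $\rho$ be a finite solid partition. For $k\ge1$ let $\Pi^{(k)}=\{(i,j,l):(i,j,l,k)\in\rho\}$ and $$\boldsymbol{\Pi}^{(k)}=\sum_{(i,j,l)\in\Pi^{(k)}}x\,q_4^{k-1}q_1^{i-1}q_2^{j-1}q_3^{l-1}.$$ Define $$s(\Pi)=\Big[\sum_{i<j}\mathbf P_{123}\,\boldsymbol{\Pi}^{(i)\vee}\boldsymbol{\Pi}^{(j)}\Big]^{(0)}.$$ Then $s(\Pi)\equiv\sigma_4(\rho)\pmod 2$, where $\sigma_4(\rho)=\#\{(i,i,i,j)\in\rho:\ i<j\}$; in particular $(-1)^{s(\Pi)}=(-1)^{\sigma_4(\rho)}$.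
   Context: A finite solid partition is a finite set $\rho\subset\mathbb Z_{\ge1}^4$ such that if $(i_1,\dots,i_4)\in\rho$ and $1\le i'_a\le i_a$ for all $a$ then $(i'_1,\dots,i'_4)\in\rho$. Characters are finite $\mathbb Z$-combinations of Laurent monomials; $\mathbf X^\vee$ replaces each monomial $m$ by $m^{-1}$. $\mathbf P_{123}=(1-q_1)(1-q_2)(1-q_3)$. For a character $\mathbf X$, after substituting $q_4=(q_1q_2q_3)^{-1}$ (the variable $x$ cancels in $\boldsymbol\Pi^{(i)\vee}\boldsymbol\Pi^{(j)}$), $[\mathbf X]^{(0)}\in\mathbb Z$ denotes its unmovable part, i.e. the coefficient of the constant monomial $1$ in the resulting Laurent polynomial in $q_1,q_2,q_3$. *)

theory Defs
  imports Main "HOL-Library.Product_Plus"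
begin

type_synonym pt4 = "nat \<times> nat \<times> nat \<times> nat"

definition solid_partition :: "pt4 set \<Rightarrow> bool" where
  "solid_partition \<rho> \<longleftrightarrow> finite \<rho> \<and>
     (\<forall>(a,b,c,d)\<in>\<rho>. 1 \<le> a \<and> 1 \<le> b \<and> 1 \<le> c \<and> 1 \<le> d) \<and>
     (\<forall>(a,b,c,d)\<in>\<rho>. \<forall>a' b' c' d'. 1 \<le> a' \<and> a' \<le> a \<and> 1 \<le> b' \<and> b' \<le> b \<and>
          1 \<le> c' \<and> c' \<le> c \<and> 1 \<le> d' \<and> d' \<le> d \<longrightarrow> (a',b',c',d') \<in> \<rho>)"

text \<open>Laurent monomials x^a q1^b q2^c q3^d q4^e are exponent vectors (a,b,c,d,e);
  a character is a finitely supported integer function on monomials.\<close>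
type_synonym mon = "int \<times> int \<times> int \<times> int \<times> int"
type_synonym chr = "mon \<Rightarrow> int"

definition supp :: "chr \<Rightarrow> mon set" where
  "supp X = {m. X m \<noteq> 0}"

definition cmon :: "mon \<Rightarrow> chr" where
  "cmon m = (\<lambda>m'. if m' = m then 1 else 0)"

definition cmul :: "chr \<Rightarrow> chr \<Rightarrow> chr" where
  "cmul X Y = (\<lambda>m. \<Sum>a\<in>supp X. X a * Y (m - a))"

definition cdual :: "chr \<Rightarrow> chr" where
  "cdual X = (\<lambda>m. X (- m))"

definition csum :: "'a set \<Rightarrow> ('a \<Rightarrow> chr) \<Rightarrow> chr" where
  "csum A f = (\<lambda>m. \<Sum>a\<in>A. f a m)"

definition one_minus :: "mon \<Rightarrow> chr" where
  "one_minus m = (\<lambda>m'. cmon 0 m' - cmon m m')"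

definition P123 :: chr where
  "P123 = cmul (cmul (one_minus (0,1,0,0,0)) (one_minus (0,0,1,0,0))) (one_minus (0,0,0,1,0))"

text \<open>Substitution q4 = (q1 q2 q3)^{-1}: x^a q1^b q2^c q3^d q4^e becomes
  x^a q1^(b-e) q2^(c-e) q3^(d-e) (encoded with q4-exponent 0).\<close>
definition subst_mon :: "mon \<Rightarrow> mon" where
  "subst_mon m = (case m of (a,b,c,d,e) \<Rightarrow> (a, b - e, c - e, d - e, 0))"

definition subst_q4 :: "chr \<Rightarrow> chr" where
  "subst_q4 X = (\<lambda>m'. \<Sum>m\<in>{m\<in>supp X. subst_mon m = m'}. X m)"

definition unmovable :: "chr \<Rightarrow> int" where
  "unmovable X = subst_q4 X 0"

definition layer :: "pt4 set \<Rightarrow> nat \<Rightarrow> (nat \<times> nat \<times> nat) set" where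
  "layer \<rho> k = {(i,j,l). (i,j,l,k) \<in> \<rho>}"

definition Pi_chr :: "pt4 set \<Rightarrow> nat \<Rightarrow> chr" where
  "Pi_chr \<rho> k = csum (layer \<rho> k)
     (\<lambda>(i,j,l). cmon (1, int i - 1, int j - 1, int l - 1, int k - 1))"

text \<open>Layers are empty beyond the largest fourth coordinate, so the sum over
  1 \<le> i < j may be restricted to j \<le> that maximum.\<close>
definition max_layer :: "pt4 set \<Rightarrow> nat" where
  "max_layer \<rho> = Max (insert 0 ((\<lambda>(a,b,c,d). d) ` \<rho>))"

definition s_Pi :: "pt4 set \<Rightarrow> int" where
  "s_Pi \<rho> = unmovable
     (csum {(i,j). 1 \<le> i \<and> i < j \<and> j \<le> max_layer \<rho>}
        (\<lambda>(i,j). cmul P123 (cmul (cdual (Pi_chr \<rho> i)) (Pi_chr \<rho> j))))"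

definition sigma4 :: "pt4 set \<Rightarrow> nat" where
  "sigma4 \<rho> = card {p\<in>\<rho>. \<exists>i j. p = (i,i,i,j) \<and> i < j}"

end

theory Submission
  imports Defs
begin

text \<open>Expanding \<open>P\<^sub>1\<^sub>2\<^sub>3\<close> and the layer characters writes s(\<Pi>) as the constant
  coefficient of a sum of monomials with coefficients \<open>\<plusminus>1\<close>, so modulo 2 it counts the terms
  that become constant under \<open>q\<^sub>4 = (q\<^sub>1q\<^sub>2q\<^sub>3)\<^sup>-\<^sup>1\<close>. Such a term is given by a box b in a
  layer j, a shift \<open>d = j - i \<ge> 1\<close> and a vertex S of the unit cube such that
  \<open>b + S - (d,d,d)\<close> is a box of layer i; by downward closure this only asks \<open>d < j\<close> and
  \<open>d < b\<^sub>k + S\<^sub>k\<close>. For fixed b and d the number of admissible S is a product over k of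
  2, 1 or 0 according as \<open>d < b\<^sub>k\<close>, \<open>d = b\<^sub>k\<close> or \<open>d > b\<^sub>k\<close>, which is odd only for
  \<open>d = b\<^sub>1 = b\<^sub>2 = b\<^sub>3\<close>. So a box contributes an odd number of terms exactly when it has the
  form (i,i,i,j) with i < j.\<close>

definition lincomb :: "'k set \<Rightarrow> ('k \<Rightarrow> int) \<Rightarrow> ('k \<Rightarrow> mon) \<Rightarrow> chr" where
  "lincomb K c g = (\<lambda>m. \<Sum>k\<in>K. c k * cmon (g k) m)"

lemma lincomb_cong:
  "(\<And>k. k \<in> K \<Longrightarrow> c k = c' k) \<Longrightarrow> (\<And>k. k \<in> K \<Longrightarrow> g k = g' k) \<Longrightarrow> lincomb K c g = lincomb K c' g'"
  unfolding lincomb_def by (auto intro!: sum.cong)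

lemma supp_lincomb: "supp (lincomb K c g) \<subseteq> g ` K"
  unfolding supp_def lincomb_def cmon_def by (auto elim: sum.not_neutral_contains_not_neutral split: if_splits)

lemma sum_lincomb_mult:
  assumes "finite A" "finite K" "g ` K \<subseteq> A"
  shows "(\<Sum>a\<in>A. lincomb K c g a * f a) = (\<Sum>k\<in>K. c k * f (g k))"
proof -
  have "(\<Sum>a\<in>A. lincomb K c g a * f a) = (\<Sum>k\<in>K. \<Sum>a\<in>A. if a = g k then c k * f a else 0)"
    unfolding lincomb_def sum_distrib_right by (subst sum.swap) (auto simp: cmon_def intro!: sum.cong)
  also have "\<dots> = (\<Sum>k\<in>K. c k * f (g k))"
    using assms by (intro sum.cong) (auto simp: sum.delta)
  finally show ?thesis .
qed

lemma cmul_lincomb_left: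
  assumes "finite K"
  shows "cmul (lincomb K c g) Y = (\<lambda>m. \<Sum>k\<in>K. c k * Y (m - g k))"
proof
  fix m
  have "cmul (lincomb K c g) Y m = (\<Sum>a\<in>g ` K. lincomb K c g a * Y (m - a))"
    unfolding cmul_def using assms supp_lincomb[of K c g]
    by (intro sum.mono_neutral_left) (auto simp: supp_def)
  then show "cmul (lincomb K c g) Y m = (\<Sum>k\<in>K. c k * Y (m - g k))"
    using assms by (simp add: sum_lincomb_mult)
qed

lemma cmul_lincomb:
  assumes "finite K" "finite L"
  shows "cmul (lincomb K c g) (lincomb L d h)
       = lincomb (K \<times> L) (\<lambda>(k,l). c k * d l) (\<lambda>(k,l). g k + h l)"
proof
  fix m
  have "cmul (lincomb K c g) (lincomb L d h) m = (\<Sum>k\<in>K. \<Sum>l\<in>L. c k * d l * cmon (g k + h l) m)"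
    by (simp only: cmul_lincomb_left[OF assms(1)])
       (auto simp: lincomb_def sum_distrib_left cmon_def algebra_simps intro!: sum.cong)
  then show "cmul (lincomb K c g) (lincomb L d h) m
      = lincomb (K \<times> L) (\<lambda>(k,l). c k * d l) (\<lambda>(k,l). g k + h l) m"
    unfolding lincomb_def sum.cartesian_product by (simp add: split_def)
qed

lemma cdual_lincomb: "cdual (lincomb K c g) = lincomb K c (\<lambda>k. - g k)"
proof -
  have "\<And>m k. - m = g k \<longleftrightarrow> m = - g k"
    by (metis minus_minus)
  then show ?thesis
    unfolding cdual_def lincomb_def cmon_def by simp
qed

lemma csum_lincomb:
  assumes "finite A" "\<And>a. a \<in> A \<Longrightarrow> finite (K a)"
    and "\<And>a. a \<in> A \<Longrightarrow> f a = lincomb (K a) (c a) (g a)"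
  shows "csum A f = lincomb (Sigma A K) (\<lambda>(a,k). c a k) (\<lambda>(a,k). g a k)"
proof -
  have "csum A f = csum A (\<lambda>a. lincomb (K a) (c a) (g a))"
    unfolding csum_def using assms(3) by simp
  then show ?thesis
    unfolding csum_def lincomb_def using assms(1,2) by (simp add: sum.Sigma split_def)
qed

lemma one_minus_lincomb:
  "one_minus m = lincomb UNIV (\<lambda>b. if b then -1 else 1) (\<lambda>b. if b then m else 0)"
  unfolding one_minus_def lincomb_def by (auto simp: UNIV_bool)

lemma unmovable_lincomb:
  assumes "finite K"
  shows "unmovable (lincomb K c g) = (\<Sum>k\<in>K. c k * of_bool (subst_mon (g k) = 0))"
proof -
  let ?X = "lincomb K c g"
  have "unmovable ?X = (\<Sum>m\<in>{m\<in>g ` K. subst_mon m = 0}. ?X m)"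
    unfolding unmovable_def subst_q4_def using assms supp_lincomb[of K c g]
    by (intro sum.mono_neutral_left) (auto simp: supp_def)
  also have "\<dots> = (\<Sum>m\<in>g ` K. ?X m * of_bool (subst_mon m = 0))"
    using assms by (simp add: Int_def)
  also have "\<dots> = (\<Sum>k\<in>K. c k * of_bool (subst_mon (g k) = 0))"
    using assms by (intro sum_lincomb_mult) auto
  finally show ?thesis .
qed

lemma even_unmovable_lincomb:
  assumes "finite K" "\<And>k. k \<in> K \<Longrightarrow> odd (c k)"
  shows "even (unmovable (lincomb K c g)) \<longleftrightarrow> even (card {k\<in>K. subst_mon (g k) = 0})"
proof -
  have "{k\<in>K. odd (c k * of_bool (subst_mon (g k) = 0))} = {k\<in>K. subst_mon (g k) = 0}"
    using assms(2) by auto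
  then show ?thesis
    unfolding unmovable_lincomb[OF assms(1)] even_sum_iff[OF assms(1)] by simp
qed

definition cube_sign :: "(bool \<times> bool) \<times> bool \<Rightarrow> int" where
  "cube_sign S = (case S of ((s1,s2),s3) \<Rightarrow>
     (if s1 then -1 else 1) * (if s2 then -1 else 1) * (if s3 then -1 else 1))"

definition cube_mon :: "(bool \<times> bool) \<times> bool \<Rightarrow> mon" where
  "cube_mon S = (case S of ((s1,s2),s3) \<Rightarrow> (0, of_bool s1, of_bool s2, of_bool s3, 0))"

lemma P123_lincomb: "P123 = lincomb UNIV cube_sign cube_mon"
  unfolding P123_def one_minus_lincomb
  by (simp add: cmul_lincomb) (intro lincomb_cong; auto simp: cube_sign_def cube_mon_def zero_prod_def)

lemma odd_cube_sign: "odd (cube_sign S)"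
  by (auto simp: cube_sign_def split: prod.splits)

definition box_mon :: "nat \<times> nat \<times> nat \<Rightarrow> nat \<Rightarrow> mon" where
  "box_mon a k = (case a of (i,j,l) \<Rightarrow> (1, int i - 1, int j - 1, int l - 1, int k - 1))"

lemma Pi_chr_lincomb: "Pi_chr \<rho> k = lincomb (layer \<rho> k) (\<lambda>_. 1) (\<lambda>a. box_mon a k)"
  unfolding Pi_chr_def csum_def lincomb_def box_mon_def by (intro ext sum.cong) auto

lemma finite_layer: "finite \<rho> \<Longrightarrow> finite (layer \<rho> k)"
proof -
  have "layer \<rho> k \<subseteq> (\<lambda>(i,j,l,k). (i,j,l)) ` \<rho>"
    unfolding layer_def by force
  then show "finite \<rho> \<Longrightarrow> finite (layer \<rho> k)"
    using finite_surj by blast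
qed

type_synonym summand_index =
  "(nat \<times> nat) \<times> ((bool \<times> bool) \<times> bool) \<times> (nat \<times> nat \<times> nat) \<times> (nat \<times> nat \<times> nat)"

definition layer_pairs :: "pt4 set \<Rightarrow> (nat \<times> nat) set" where
  "layer_pairs \<rho> = {(i,j). 1 \<le> i \<and> i < j \<and> j \<le> max_layer \<rho>}"

lemma finite_layer_pairs: "finite (layer_pairs \<rho>)"
  unfolding layer_pairs_def
  by (rule finite_subset[of _ "{..max_layer \<rho>} \<times> {..max_layer \<rho>}"]) auto

definition summands :: "pt4 set \<Rightarrow> summand_index set" where
  "summands \<rho> = Sigma (layer_pairs \<rho>) (\<lambda>(i,j). UNIV \<times> layer \<rho> i \<times> layer \<rho> j)"

definition summand_mon :: "summand_index \<Rightarrow> mon" where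
  "summand_mon t = (case t of ((i,j),(S,(a,b))) \<Rightarrow> cube_mon S + (- box_mon a i + box_mon b j))"

lemma finite_summands: "finite \<rho> \<Longrightarrow> finite (summands \<rho>)"
  unfolding summands_def by (auto intro!: finite_SigmaI finite_layer_pairs finite_layer)

lemma s_Pi_lincomb:
  assumes "finite \<rho>"
  shows "s_Pi \<rho> = unmovable (lincomb (summands \<rho>) (\<lambda>t. cube_sign (fst (snd t))) summand_mon)"
proof -
  have summand: "cmul P123 (cmul (cdual (Pi_chr \<rho> i)) (Pi_chr \<rho> j))
      = lincomb (UNIV \<times> layer \<rho> i \<times> layer \<rho> j) (\<lambda>(S,_). cube_sign S)
          (\<lambda>(S,(a,b)). cube_mon S + (- box_mon a i + box_mon b j))" for i j
    unfolding Pi_chr_lincomb cdual_lincomb P123_lincomb using finite_layer[OF assms]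
    by (simp add: cmul_lincomb) (intro lincomb_cong; auto)
  show ?thesis
    unfolding s_Pi_def layer_pairs_def[symmetric] summands_def
    by (subst csum_lincomb[where K = "\<lambda>(i,j). UNIV \<times> layer \<rho> i \<times> layer \<rho> j"])
       (auto simp: summand finite_layer_pairs finite_layer[OF assms] summand_mon_def intro!: arg_cong[where f = unmovable] lincomb_cong)
qed

definition unmovable_summands :: "pt4 set \<Rightarrow> summand_index set" where
  "unmovable_summands \<rho> = {t \<in> summands \<rho>. subst_mon (summand_mon t) = 0}"

lemma even_s_Pi_iff: "finite \<rho> \<Longrightarrow> even (s_Pi \<rho>) \<longleftrightarrow> even (card (unmovable_summands \<rho>))"
  unfolding s_Pi_lincomb unmovable_summands_def
  by (intro even_unmovable_lincomb finite_summands odd_cube_sign)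

lemma subst_summand_mon_eq_0_iff:
  "subst_mon (summand_mon ((i,j),((s1,s2),s3),(a1,a2,a3),(b1,b2,b3))) = 0 \<longleftrightarrow>
     a1 + j = b1 + of_bool s1 + i \<and> a2 + j = b2 + of_bool s2 + i \<and> a3 + j = b3 + of_bool s3 + i"
  by (auto simp: summand_mon_def cube_mon_def box_mon_def subst_mon_def zero_prod_def)

lemma solid_partition_finite: "solid_partition \<rho> \<Longrightarrow> finite \<rho>"
  unfolding solid_partition_def by blast

lemma solid_partition_pos:
  "solid_partition \<rho> \<Longrightarrow> (a,b,c,d) \<in> \<rho> \<Longrightarrow> 1 \<le> a \<and> 1 \<le> b \<and> 1 \<le> c \<and> 1 \<le> d"
  unfolding solid_partition_def by fast

lemma solid_partition_down_closed:
  "solid_partition \<rho> \<Longrightarrow> (a,b,c,d) \<in> \<rho> \<Longrightarrow> 1 \<le> a' \<Longrightarrow> a' \<le> a \<Longrightarrow> 1 \<le> b' \<Longrightarrow> b' \<le> b \<Longrightarrow>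
    1 \<le> c' \<Longrightarrow> c' \<le> c \<Longrightarrow> 1 \<le> d' \<Longrightarrow> d' \<le> d \<Longrightarrow> (a',b',c',d') \<in> \<rho>"
  unfolding solid_partition_def by fastforce

lemma le_max_layer: "finite \<rho> \<Longrightarrow> (a,b,c,e) \<in> \<rho> \<Longrightarrow> e \<le> max_layer \<rho>"
  unfolding max_layer_def by (rule Max_ge) force+

definition shifts :: "pt4 \<Rightarrow> (nat \<times> (bool \<times> bool) \<times> bool) set" where
  "shifts p = (case p of (b1,b2,b3,e) \<Rightarrow>
     SIGMA d:{1..<e}. ({s. d < b1 + of_bool s} \<times> {s. d < b2 + of_bool s}) \<times> {s. d < b3 + of_bool s})"

definition shift_of_summand :: "summand_index \<Rightarrow> pt4 \<times> nat \<times> (bool \<times> bool) \<times> bool" where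
  "shift_of_summand t = (case t of ((i,j),(S,(a,(b1,b2,b3)))) \<Rightarrow> ((b1,b2,b3,j),(j - i, S)))"

lemma mem_unmovable_summands_iff:
  "((i,j),((s1,s2),s3),(a1,a2,a3),(b1,b2,b3)) \<in> unmovable_summands \<rho> \<longleftrightarrow>
     1 \<le> i \<and> i < j \<and> j \<le> max_layer \<rho> \<and> (a1,a2,a3,i) \<in> \<rho> \<and> (b1,b2,b3,j) \<in> \<rho> \<and>
     a1 + j = b1 + of_bool s1 + i \<and> a2 + j = b2 + of_bool s2 + i \<and> a3 + j = b3 + of_bool s3 + i"
  by (simp add: unmovable_summands_def summands_def layer_pairs_def layer_def
      subst_summand_mon_eq_0_iff conj_ac)

lemma mem_shifts_iff:
  "(d,((s1,s2),s3)) \<in> shifts (b1,b2,b3,e) \<longleftrightarrow>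
     1 \<le> d \<and> d < e \<and> d < b1 + of_bool s1 \<and> d < b2 + of_bool s2 \<and> d < b3 + of_bool s3"
  unfolding shifts_def by auto

lemma bij_betw_shift_of_summand:
  assumes "solid_partition \<rho>"
  shows "bij_betw shift_of_summand (unmovable_summands \<rho>) (Sigma \<rho> shifts)"
proof (rule bij_betwI')
  fix t t'
  assume "t \<in> unmovable_summands \<rho>" "t' \<in> unmovable_summands \<rho>"
  then show "shift_of_summand t = shift_of_summand t' \<longleftrightarrow> t = t'"
    by (cases t; cases t') (auto simp: shift_of_summand_def mem_unmovable_summands_iff)
next
  fix t
  assume "t \<in> unmovable_summands \<rho>"
  moreover obtain i j s1 s2 s3 a1 a2 a3 b1 b2 b3
    where t: "t = ((i,j),((s1,s2),s3),(a1,a2,a3),(b1,b2,b3))"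
    by (metis prod.exhaust)
  ultimately show "shift_of_summand t \<in> Sigma \<rho> shifts"
    using solid_partition_pos[OF assms, of a1 a2 a3 i]
    by (auto simp: t shift_of_summand_def mem_unmovable_summands_iff mem_shifts_iff)
next
  fix y
  assume "y \<in> Sigma \<rho> shifts"
  moreover obtain b1 b2 b3 e d s1 s2 s3 where y: "y = ((b1,b2,b3,e),(d,((s1,s2),s3)))"
    by (metis prod.exhaust)
  ultimately have b: "(b1,b2,b3,e) \<in> \<rho>" and d: "1 \<le> d" "d < e"
    "d < b1 + of_bool s1" "d < b2 + of_bool s2" "d < b3 + of_bool s3"
    by (auto simp: mem_shifts_iff)
  have "(b1 + of_bool s1 - d, b2 + of_bool s2 - d, b3 + of_bool s3 - d, e - d) \<in> \<rho>"
    using d by (intro solid_partition_down_closed[OF assms b]) auto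
  moreover have "e \<le> max_layer \<rho>"
    using le_max_layer[OF solid_partition_finite[OF assms] b] .
  ultimately have "((e - d, e), ((s1,s2),s3), (b1 + of_bool s1 - d, b2 + of_bool s2 - d, b3 + of_bool s3 - d),
      (b1,b2,b3)) \<in> unmovable_summands \<rho>"
    using b d by (auto simp: mem_unmovable_summands_iff)
  moreover have "y = shift_of_summand ((e - d, e), ((s1,s2),s3),
      (b1 + of_bool s1 - d, b2 + of_bool s2 - d, b3 + of_bool s3 - d), (b1,b2,b3))"
    using d by (simp add: y shift_of_summand_def)
  ultimately show "\<exists>t \<in> unmovable_summands \<rho>. y = shift_of_summand t"
    by blast
qed

lemma finite_shifts: "finite (shifts p)"
  unfolding shifts_def by (auto split: prod.split)

lemma odd_card_bool_less_add_of_bool_iff: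
  fixes d b :: nat
  shows "odd (card {s. d < b + of_bool s}) \<longleftrightarrow> d = b"
proof -
  have "{s. d < b + of_bool s} = (if d < b then UNIV else if d = b then {True} else {})"
    by auto
  then show ?thesis
    by (simp add: card_UNIV_bool)
qed

lemma odd_card_shifts_iff:
  "odd (card (shifts (b1,b2,b3,e))) \<longleftrightarrow> b1 = b2 \<and> b2 = b3 \<and> 1 \<le> b1 \<and> b1 < e"
proof -
  let ?N = "\<lambda>b d. card {s. d < b + of_bool s}"
  have "card (shifts (b1,b2,b3,e)) = (\<Sum>d\<in>{1..<e}. ?N b1 d * ?N b2 d * ?N b3 d)"
    unfolding shifts_def by (simp add: card_cartesian_product)
  moreover have "{d\<in>{1..<e}. odd (?N b1 d * ?N b2 d * ?N b3 d)}
      = (if b1 = b2 \<and> b2 = b3 \<and> 1 \<le> b1 \<and> b1 < e then {b1} else {})"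
    by (auto simp: odd_card_bool_less_add_of_bool_iff)
  ultimately show ?thesis
    by (simp add: even_sum_iff)
qed

lemma even_s_Pi_iff_even_sigma4:
  assumes "solid_partition \<rho>"
  shows "even (s_Pi \<rho>) \<longleftrightarrow> even (sigma4 \<rho>)"
proof -
  have fin: "finite \<rho>"
    using assms by (rule solid_partition_finite)
  have "even (s_Pi \<rho>) \<longleftrightarrow> even (card (Sigma \<rho> shifts))"
    using even_s_Pi_iff[OF fin] bij_betw_same_card[OF bij_betw_shift_of_summand[OF assms]] by simp
  also have "card (Sigma \<rho> shifts) = (\<Sum>p\<in>\<rho>. card (shifts p))"
    using fin by (simp add: finite_shifts)
  also have "even \<dots> \<longleftrightarrow> even (card {p\<in>\<rho>. odd (card (shifts p))})"
    using fin by (rule even_sum_iff)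
  also have "{p\<in>\<rho>. odd (card (shifts p))} = {p\<in>\<rho>. \<exists>i j. p = (i,i,i,j) \<and> i < j}"
  proof (intro Collect_cong conj_cong refl)
    fix p
    assume "p \<in> \<rho>"
    moreover obtain b1 b2 b3 e where p: "p = (b1,b2,b3,e)"
      by (cases p)
    ultimately show "odd (card (shifts p)) \<longleftrightarrow> (\<exists>i j. p = (i,i,i,j) \<and> i < j)"
      using solid_partition_pos[OF assms, of b1 b2 b3 e] by (auto simp: p odd_card_shifts_iff)
  qed
  finally show ?thesis
    unfolding sigma4_def .
qed

theorem proposition6p8:
  assumes "solid_partition \<rho>"
  shows "s_Pi \<rho> mod 2 = int (sigma4 \<rho>) mod 2
         \<and> (-1::int) ^ nat \<bar>s_Pi \<rho>\<bar> = (-1) ^ sigma4 \<rho>"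
proof -
  have parity: "even (s_Pi \<rho>) \<longleftrightarrow> even (sigma4 \<rho>)"
    using assms by (rule even_s_Pi_iff_even_sigma4)
  then have "s_Pi \<rho> mod 2 = int (sigma4 \<rho>) mod 2"
    by (simp add: mod_eq_dvd_iff)
  moreover have "(-1::int) ^ nat \<bar>s_Pi \<rho>\<bar> = (-1) ^ sigma4 \<rho>"
    using parity by (simp add: even_nat_iff minus_one_power_iff)
  ultimately show ?thesis ..
qed

end
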